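(* Let $A$ be a real $m\times m$ matrix, $f$ in the range of $A$, and $y$ the minimal-norm solution of $Ay=f$ (so $y\perp\mathcal{N}(A)$). Fix $q\in(0,1)$, $\alpha_0>0$, $C>1$, $\varepsilon\in(0,1)$. For each $\delta\in(0,1)$ let $f_\delta\in\mathbb{R}^m$ satisfy $\|f_\delta-f\|\le\delta$ and $(1-q)\alpha_0q\|Q_{\alpha_0q}^{-1}f_\delta\|>C\delta^\varepsilon$. Define $u_0^\delta=0$, $u_{n+1}^\delta=qu_n^\delta+(1-q)T_{\alpha_0q^{n+1}}^{-1}A^*f_\delta$, and let $n_\delta$ be the smallest integer $n\ge1$ with $G_n\le C\delta^\varepsilon$. Then $$\lim_{\delta\to0}\|u_{n_\delta}^\delta-y\|=0.$$
   Context: $A^*$ is the transpose of $A$, $T:=A^*A$, $T_a:=T+aI$, $Q:=AA^*$, $Q_a:=Q+aI$ for $a>0$; $\mathcal{N}(A)=\{u:Au=0\}$; $\|\cdot\|$ is the Euclidean norm. $G_0=0$ and $G_n=qG_{n-1}+(1-q)\alpha_0q^n\|Q_{\alpha_0q^n}^{-1}f_\delta\|$ for $n\ge1$. *)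

theory Defs
  imports "HOL-Analysis.Analysis"
begin

definition Tmat :: "real^'m^'m \<Rightarrow> real^'m^'m" where
  "Tmat A = transpose A ** A"

definition Qmat :: "real^'m^'m \<Rightarrow> real^'m^'m" where
  "Qmat A = A ** transpose A"

definition Tinv :: "real^'m^'m \<Rightarrow> real \<Rightarrow> real^'m^'m" where
  "Tinv A a = matrix_inv (Tmat A + a *\<^sub>R mat 1)"

definition Qinv :: "real^'m^'m \<Rightarrow> real \<Rightarrow> real^'m^'m" where
  "Qinv A a = matrix_inv (Qmat A + a *\<^sub>R mat 1)"

definition min_norm_solution :: "real^'m^'m \<Rightarrow> real^'m \<Rightarrow> real^'m \<Rightarrow> bool" where
  "min_norm_solution A f y \<longleftrightarrow> A *v y = f \<and> (\<forall>x. A *v x = f \<longrightarrow> norm y \<le> norm x)"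

primrec Gseq :: "real^'m^'m \<Rightarrow> real \<Rightarrow> real \<Rightarrow> real^'m \<Rightarrow> nat \<Rightarrow> real" where
  "Gseq A a0 q fd 0 = 0"
| "Gseq A a0 q fd (Suc n) = q * Gseq A a0 q fd n
     + (1 - q) * a0 * q ^ Suc n * norm (Qinv A (a0 * q ^ Suc n) *v fd)"

primrec useq :: "real^'m^'m \<Rightarrow> real \<Rightarrow> real \<Rightarrow> real^'m \<Rightarrow> nat \<Rightarrow> real^'m" where
  "useq A a0 q fd 0 = 0"
| "useq A a0 q fd (Suc n) = q *\<^sub>R useq A a0 q fd n
     + (1 - q) *\<^sub>R (Tinv A (a0 * q ^ Suc n) *v (transpose A *v fd))"

definition stop_index :: "real^'m^'m \<Rightarrow> real \<Rightarrow> real \<Rightarrow> real^'m \<Rightarrow> real \<Rightarrow> real \<Rightarrow> real \<Rightarrow> nat" where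
  "stop_index A a0 q fd C \<epsilon> \<delta> = (LEAST n. 1 \<le> n \<and> Gseq A a0 q fd n \<le> C * \<delta> powr \<epsilon>)"

end

theory Submission
  imports Defs
begin

(*
  (1) For any matrix B and a > 0 the regularized normal equation (B^T B + aI) w = v is uniquely
  solvable, with a |w| <= |v| and |B w| <= |v| / (2 sqrt a).
  (2) Applied to B = A and B = A^T, together with T_a^{-1} A^T = A^T Q_a^{-1}, this bounds
  T_a^{-1} A^T, Q_a^{-1}, Q_a^{-1} A and the residual T_a^{-1} A^T A y - y for y = A^T z; the
  minimal-norm solution has this form.
  (3) The iterates, their noise propagation and G_n all satisfy recursions
  x_{n+1} <= q x_n + (1-q) c rho^{n+1}, and one comparison lemma gives
    |u_n(A y) - y| <= D sqrt(q)^n,    |u_n(g) - u_n(f)| <= |g - f| / sqrt a0 * sqrt(q)^(-n),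
    G_n(g) <= |g - A y| + sqrt a0 |y| sqrt(q)^n.
  (4) The last bound shows that the stopping index n_delta exists and that
  C delta^eps - delta < sqrt a0 |y| sqrt(q)^(n_delta - 1), so the propagated noise is
  O(delta^(1-eps)); continuity of each G_k in the data and G_k(f) > 0 force n_delta -> infinity,
  so the bias D sqrt(q)^(n_delta) vanishes as well.
*)

text \<open>Keep A^T v as a matrix-vector product instead of rewriting it to a row-vector product.\<close>
declare transpose_matrix_vector [simp del]

lemma scaleR_mat_one_mult: "(a *\<^sub>R mat 1) *v (x::real^'n) = a *\<^sub>R x"
  by (metis matrix_vector_mul_lid scaleR_matrix_vector_assoc)

lemma inner_transpose_mult: "inner x (transpose (B::real^'n^'m) *v z) = inner (B *v x) z"
  by (metis dot_lmul_matrix inner_commute transpose_matrix_vector)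

lemma regularized_quadratic_form:
  fixes B :: "real^'n^'m"
  shows "inner x ((transpose B ** B + a *\<^sub>R mat 1) *v x) = (norm (B *v x))\<^sup>2 + a * (norm x)\<^sup>2"
  by (simp flip: matrix_vector_mul_assoc
      add: matrix_vector_mult_add_rdistrib scaleR_mat_one_mult inner_add_right
           inner_transpose_mult power2_norm_eq_inner)

lemma le_div_two_sqrt_of_sq_le:
  fixes x v a :: real
  assumes "0 < a" "0 \<le> x" "0 \<le> v" "x\<^sup>2 \<le> v\<^sup>2 / (4 * a)"
  shows "x \<le> v / (2 * sqrt a)"
proof -
  have "(v / (2 * sqrt a))\<^sup>2 = v\<^sup>2 / (4 * a)"
    using assms by (simp add: power_divide power_mult_distrib)
  then show ?thesis
    using assms by (metis power2_le_imp_le divide_nonneg_pos mult_pos_pos real_sqrt_gt_zero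
        zero_less_numeral less_imp_le)
qed

lemma regularized_solution_bounds:
  fixes B :: "real^'n^'m"
  assumes a: "0 < a" and w: "(transpose B ** B + a *\<^sub>R mat 1) *v w = v"
  shows "a * norm w \<le> norm v" and "norm (B *v w) \<le> norm v / (2 * sqrt a)"
proof -
  have energy: "inner w v = (norm (B *v w))\<^sup>2 + a * (norm w)\<^sup>2"
    using regularized_quadratic_form[of w B a] w by simp
  have cauchy_schwarz: "inner w v \<le> norm w * norm v"
    by (rule norm_cauchy_schwarz)
  have "a * (norm w)\<^sup>2 \<le> norm w * norm v"
    using energy cauchy_schwarz zero_le_power2[of "norm (B *v w)"] by linarith
  then show "a * norm w \<le> norm v"
    by (smt (verit, best) mult_le_cancel_left norm_ge_zero power2_eq_square mult.assoc mult.commute)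
  have "(norm (B *v w))\<^sup>2 \<le> norm w * norm v - a * (norm w)\<^sup>2"
    using energy cauchy_schwarz by linarith
  also have "\<dots> \<le> (norm v)\<^sup>2 / (4 * a)"
  proof -
    have "4 * a * (norm w * norm v - a * (norm w)\<^sup>2) \<le> (norm v)\<^sup>2"
      using zero_le_power2[of "2 * a * norm w - norm v"] by (simp add: power2_eq_square algebra_simps)
    then show ?thesis
      using a by (simp add: field_simps)
  qed
  finally show "norm (B *v w) \<le> norm v / (2 * sqrt a)"
    using a by (intro le_div_two_sqrt_of_sq_le) auto
qed

text \<open>By the first bound, B^T B + aI has trivial kernel, hence is invertible.\<close>
lemma regularized_invertible:
  fixes B :: "real^'n^'m"
  assumes "0 < a"
  shows "invertible (transpose B ** B + a *\<^sub>R mat 1)"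
proof -
  have "x = 0" if "(transpose B ** B + a *\<^sub>R mat 1) *v x = 0" for x
    using regularized_solution_bounds(1)[OF assms that] assms by (simp add: mult_le_0_iff)
  then show ?thesis
    using invertible_left_inverse matrix_left_invertible_ker by blast
qed

lemma matrix_inv_cancel:
  fixes M :: "'a::comm_semiring_1^'n^'m"
  assumes "invertible M"
  shows "M *v (matrix_inv M *v v) = v" "matrix_inv M *v (M *v u) = u"
proof -
  have "M ** matrix_inv M = mat 1 \<and> matrix_inv M ** M = mat 1"
    using assms unfolding invertible_def matrix_inv_def by (rule someI_ex)
  then show "M *v (matrix_inv M *v v) = v" "matrix_inv M *v (M *v u) = u"
    by (simp_all add: matrix_vector_mul_assoc)
qed

lemma Tinv_cancel:
  fixes A :: "real^'m^'m"
  assumes "0 < a"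
  shows "(Tmat A + a *\<^sub>R mat 1) *v (Tinv A a *v v) = v"
    and "Tinv A a *v ((Tmat A + a *\<^sub>R mat 1) *v u) = u"
  using matrix_inv_cancel[OF regularized_invertible[OF assms, of A]]
  unfolding Tinv_def Tmat_def by simp_all

lemma Qinv_cancel:
  fixes A :: "real^'m^'m"
  assumes "0 < a"
  shows "(Qmat A + a *\<^sub>R mat 1) *v (Qinv A a *v v) = v"
    and "Qinv A a *v ((Qmat A + a *\<^sub>R mat 1) *v u) = u"
  using matrix_inv_cancel[OF regularized_invertible[OF assms, of "transpose A"]]
  unfolding Qinv_def Qmat_def transpose_transpose by simp_all

lemma Tmat_transpose_commute:
  "(Tmat A + a *\<^sub>R mat 1) *v (transpose A *v w) = transpose A *v ((Qmat A + a *\<^sub>R mat 1) *v w)"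
  by (simp add: Tmat_def Qmat_def matrix_vector_mult_add_rdistrib scaleR_mat_one_mult
      matrix_vector_right_distrib matrix_vector_mult_scaleR flip: matrix_vector_mul_assoc)

lemma Qmat_commute:
  "(Qmat A + a *\<^sub>R mat 1) *v (A *v w) = A *v ((Tmat A + a *\<^sub>R mat 1) *v w)"
  by (simp add: Tmat_def Qmat_def matrix_vector_mult_add_rdistrib scaleR_mat_one_mult
      matrix_vector_right_distrib matrix_vector_mult_scaleR flip: matrix_vector_mul_assoc)

lemma Tinv_transpose:
  fixes A :: "real^'m^'m"
  assumes "0 < a"
  shows "Tinv A a *v (transpose A *v v) = transpose A *v (Qinv A a *v v)"
proof -
  have "transpose A *v v = (Tmat A + a *\<^sub>R mat 1) *v (transpose A *v (Qinv A a *v v))"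
    by (simp add: Tmat_transpose_commute Qinv_cancel(1)[OF assms])
  then show ?thesis
    by (simp add: Tinv_cancel(2)[OF assms])
qed

lemma Qinv_mult:
  fixes A :: "real^'m^'m"
  assumes "0 < a"
  shows "Qinv A a *v (A *v v) = A *v (Tinv A a *v v)"
proof -
  have "A *v v = (Qmat A + a *\<^sub>R mat 1) *v (A *v (Tinv A a *v v))"
    by (simp add: Qmat_commute Tinv_cancel(1)[OF assms])
  then show ?thesis
    by (simp add: Qinv_cancel(2)[OF assms])
qed

text \<open>|T_a^{-1} A^T v| \<le> |v| / (2 sqrt a): governs the propagation of data noise.\<close>
lemma Tinv_transpose_bound:
  fixes A :: "real^'m^'m"
  assumes "0 < a"
  shows "norm (Tinv A a *v (transpose A *v v)) \<le> norm v / (2 * sqrt a)"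
  using regularized_solution_bounds(2)[OF assms, of "transpose A", unfolded transpose_transpose,
        OF Qinv_cancel(1)[OF assms, unfolded Qmat_def]]
  by (simp add: Tinv_transpose[OF assms])

text \<open>a |Q_a^{-1} v| \<le> |v|: the discrepancy term of G_n is bounded by the data error.\<close>
lemma Qinv_bound:
  fixes A :: "real^'m^'m"
  assumes "0 < a"
  shows "a * norm (Qinv A a *v v) \<le> norm v"
  using regularized_solution_bounds(1)[OF assms, of "transpose A", unfolded transpose_transpose,
        OF Qinv_cancel(1)[OF assms, unfolded Qmat_def]] .

text \<open>a |Q_a^{-1} A x| \<le> sqrt a |x| / 2: the discrepancy of exact data decays like sqrt a.\<close>
lemma Qinv_range_bound:
  fixes A :: "real^'m^'m"
  assumes "0 < a"
  shows "a * norm (Qinv A a *v (A *v x)) \<le> sqrt a * norm x / 2"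
proof -
  have "norm (A *v (Tinv A a *v x)) \<le> norm x / (2 * sqrt a)"
    using regularized_solution_bounds(2)[OF assms, of A, OF Tinv_cancel(1)[OF assms, unfolded Tmat_def]] .
  then have "a * norm (A *v (Tinv A a *v x)) \<le> a * (norm x / (2 * sqrt a))"
    using assms by (intro mult_left_mono) auto
  also have "\<dots> = sqrt a * norm x / 2"
    using assms by (simp add: field_simps)
  finally show ?thesis
    by (simp add: Qinv_mult[OF assms])
qed

text \<open>For y = A^T z the Tikhonov residual T_a^{-1} A^T A y - y is O(sqrt a): the source of the bias decay.\<close>
lemma Tinv_residual_bound:
  fixes A :: "real^'m^'m"
  assumes a: "0 < a" and yz: "y = transpose A *v z"
  shows "norm (Tinv A a *v (transpose A *v (A *v y)) - y) \<le> sqrt a * norm z / 2"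
proof -
  have "(Tmat A + a *\<^sub>R mat 1) *v y = transpose A *v (A *v y) + a *\<^sub>R y"
    by (simp add: Tmat_def matrix_vector_mult_add_rdistrib scaleR_mat_one_mult
        flip: matrix_vector_mul_assoc)
  then have "y = Tinv A a *v (transpose A *v (A *v y)) + a *\<^sub>R (Tinv A a *v y)"
    using Tinv_cancel(2)[OF a, of A y]
    by (simp add: matrix_vector_right_distrib matrix_vector_mult_scaleR)
  then have "Tinv A a *v (transpose A *v (A *v y)) - y = - (a *\<^sub>R (Tinv A a *v y))"
    by (metis add_diff_cancel_left' minus_diff_eq diff_add_cancel)
  then have "norm (Tinv A a *v (transpose A *v (A *v y)) - y) = a * norm (Tinv A a *v y)"
    using a by simp
  also have "\<dots> \<le> a * (norm z / (2 * sqrt a))"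
    using Tinv_transpose_bound[OF a, of A z] yz a by (intro mult_left_mono) auto
  also have "\<dots> = sqrt a * norm z / 2"
    using a by (simp add: field_simps)
  finally show ?thesis .
qed

text \<open>Q_a^{-1} is injective; this makes G_n(f) positive for f \<noteq> 0.\<close>
lemma Qinv_nonzero:
  fixes A :: "real^'m^'m"
  assumes "0 < a" "v \<noteq> 0"
  shows "Qinv A a *v v \<noteq> 0"
  using Qinv_cancel(1)[OF assms(1), of A v] assms(2) by auto

text \<open>The minimal-norm solution is orthogonal to the kernel, i.e. lies in the range of A^T.\<close>
lemma min_norm_solution_in_range_transpose:
  fixes A :: "real^'m^'m"
  assumes "min_norm_solution A f y"
  shows "\<exists>z. y = transpose A *v z"
proof -
  let ?S = "range (\<lambda>v. transpose A *v v)"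
  have "subspace ?S"
    using linear_subspace_image[OF matrix_vector_mul_linear[of "transpose A"] subspace_UNIV]
    by (simp add: image_def)
  then have span: "span ?S = ?S"
    by (simp add: span_eq_iff)
  obtain p k where p: "p \<in> span ?S" and k: "\<And>w. w \<in> span ?S \<Longrightarrow> orthogonal k w"
    and y: "y = p + k"
    using orthogonal_subspace_decomp_exists[of ?S y] by blast
  have "orthogonal k (transpose A *v (A *v k))"
    using k span by auto
  then have Ak: "A *v k = 0"
    by (simp add: orthogonal_def inner_transpose_mult)
  have "A *v p = f"
    using assms Ak y by (simp add: min_norm_solution_def matrix_vector_right_distrib)
  then have "norm y \<le> norm p"
    using assms by (simp add: min_norm_solution_def)
  moreover have "(norm y)\<^sup>2 = (norm p)\<^sup>2 + (norm k)\<^sup>2"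
    using y k[OF p] norm_add_Pythagorean orthogonal_commute by blast
  ultimately have "(norm k)\<^sup>2 \<le> 0"
    by (smt (verit, best) norm_ge_zero power_mono)
  then have "k = 0"
    by simp
  with p span y show ?thesis
    by auto
qed

lemma geometric_recursion:
  fixes x :: "nat \<Rightarrow> real"
  assumes q: "0 \<le> q" and rho: "0 \<le> \<rho>" and rate: "(1 - q) * c * \<rho> \<le> D * (\<rho> - q)"
    and start: "x 0 \<le> D" and step: "\<And>n. x (Suc n) \<le> q * x n + (1 - q) * (c * \<rho> ^ Suc n)"
  shows "x n \<le> D * \<rho> ^ n"
proof (induction n)
  case 0
  show ?case using start by simp
next
  case (Suc n)
  have "x (Suc n) \<le> q * (D * \<rho> ^ n) + (1 - q) * (c * \<rho> ^ Suc n)"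
    using step[of n] mult_left_mono[OF Suc.IH q] by linarith
  also have "\<dots> = \<rho> ^ n * (q * D + (1 - q) * c * \<rho>)"
    by (simp add: algebra_simps)
  also have "\<dots> \<le> \<rho> ^ n * (D * \<rho>)"
    using rate rho by (intro mult_left_mono) (simp_all add: algebra_simps)
  also have "\<dots> = D * \<rho> ^ Suc n"
    by (simp add: algebra_simps)
  finally show ?case .
qed

text \<open>The two rates used: decay sqrt q (bias, discrepancy) and growth 1 / sqrt q (noise).\<close>
lemma sqrt_rate:
  assumes "0 < q" "q < 1" "0 \<le> c" "2 * c \<le> D"
  shows "(1 - q) * c * sqrt q \<le> D * (sqrt q - q)"
proof -
  define r where "r = sqrt q"
  have r: "0 < r" "r < 1" "q = r\<^sup>2"
    using assms by (auto simp: r_def)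
  have "(1 + r) * c \<le> 2 * c"
    using r assms by (intro mult_right_mono) auto
  then have "(1 + r) * c \<le> D"
    using assms by linarith
  then have "r * (1 - r) * ((1 + r) * c) \<le> r * (1 - r) * D"
    using r by (intro mult_left_mono) auto
  then show ?thesis
    unfolding r_def[symmetric] by (simp add: r(3) power2_eq_square algebra_simps)
qed

lemma inverse_sqrt_rate:
  assumes "0 < q" "q < 1" "0 \<le> K"
  shows "(1 - q) * (K / 2) * inverse (sqrt q) \<le> K * (inverse (sqrt q) - q)"
proof -
  define r where "r = sqrt q"
  have r: "0 < r" "r < 1" "q = r * r"
    using assms by (auto simp: r_def)
  have "r * r * r \<le> r * r" "r * r \<le> 1"
    using r by (auto simp: mult_le_one)
  then have "K * ((1 - r * r) / 2) \<le> K * (1 - r * r * r)"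
    using assms by (intro mult_left_mono) auto
  also have "K * (1 - r * r * r) = r * (K * (inverse r - q))"
    using r by (simp add: algebra_simps)
  finally have "inverse r * (K * ((1 - r * r) / 2)) \<le> K * (inverse r - q)"
    using r by (simp add: field_simps)
  then show ?thesis
    unfolding r_def[symmetric] using r by (simp add: algebra_simps)
qed

lemma sqrt_regularization_parameter:
  "0 \<le> q \<Longrightarrow> 0 \<le> a0 \<Longrightarrow> sqrt (a0 * q ^ k) = sqrt a0 * sqrt q ^ k"
  by (simp add: real_sqrt_mult real_sqrt_power)

lemma norm_convex_combination:
  fixes u v :: "'a::real_normed_vector"
  assumes "0 \<le> q" "q \<le> 1"
  shows "norm (q *\<^sub>R u + (1 - q) *\<^sub>R v) \<le> q * norm u + (1 - q) * norm v"
  using norm_triangle_ineq[of "q *\<^sub>R u" "(1 - q) *\<^sub>R v"] assms by simp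

lemma bias_estimate:
  fixes A :: "real^'m^'m"
  assumes q: "0 < q" "q < 1" and a0: "0 < a0" and yz: "y = transpose A *v z"
  shows "norm (useq A a0 q (A *v y) n - y) \<le> (norm y + sqrt a0 * norm z) * sqrt q ^ n"
proof (rule geometric_recursion[where c = "sqrt a0 * norm z / 2"])
  show "(1 - q) * (sqrt a0 * norm z / 2) * sqrt q \<le> (norm y + sqrt a0 * norm z) * (sqrt q - q)"
    using q a0 by (intro sqrt_rate) auto
  fix n
  define x where "x = Tinv A (a0 * q ^ Suc n) *v (transpose A *v (A *v y))"
  have "norm (x - y) \<le> sqrt (a0 * q ^ Suc n) * norm z / 2"
    unfolding x_def using q a0 yz by (intro Tinv_residual_bound) auto
  then have x: "norm (x - y) \<le> sqrt a0 * norm z / 2 * sqrt q ^ Suc n"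
    unfolding sqrt_regularization_parameter[OF q(1)[THEN less_imp_le] a0[THEN less_imp_le]]
    by (simp add: ac_simps)
  have "useq A a0 q (A *v y) (Suc n) - y
      = q *\<^sub>R (useq A a0 q (A *v y) n - y) + (1 - q) *\<^sub>R (x - y)"
    by (simp add: x_def algebra_simps)
  then have "norm (useq A a0 q (A *v y) (Suc n) - y)
      \<le> q * norm (useq A a0 q (A *v y) n - y) + (1 - q) * norm (x - y)"
    using q by (simp add: norm_convex_combination)
  also have "\<dots> \<le> q * norm (useq A a0 q (A *v y) n - y) + (1 - q) * (sqrt a0 * norm z / 2 * sqrt q ^ Suc n)"
    using x q by (intro add_left_mono mult_left_mono) auto
  finally show "norm (useq A a0 q (A *v y) (Suc n) - y)
      \<le> q * norm (useq A a0 q (A *v y) n - y) + (1 - q) * (sqrt a0 * norm z / 2 * sqrt q ^ Suc n)" .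
qed (use q a0 in auto)

lemma noise_estimate:
  fixes A :: "real^'m^'m"
  assumes q: "0 < q" "q < 1" and a0: "0 < a0"
  shows "norm (useq A a0 q g n - useq A a0 q f n) \<le> norm (g - f) / sqrt a0 * inverse (sqrt q) ^ n"
proof (rule geometric_recursion[where c = "norm (g - f) / sqrt a0 / 2"])
  show "(1 - q) * (norm (g - f) / sqrt a0 / 2) * inverse (sqrt q)
      \<le> norm (g - f) / sqrt a0 * (inverse (sqrt q) - q)"
    using q a0 by (intro inverse_sqrt_rate) auto
  fix n
  define x where "x = Tinv A (a0 * q ^ Suc n) *v (transpose A *v (g - f))"
  have "norm x \<le> norm (g - f) / (2 * sqrt (a0 * q ^ Suc n))"
    unfolding x_def using q a0 by (intro Tinv_transpose_bound) auto
  then have x: "norm x \<le> norm (g - f) / sqrt a0 / 2 * inverse (sqrt q) ^ Suc n"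
    unfolding sqrt_regularization_parameter[OF q(1)[THEN less_imp_le] a0[THEN less_imp_le]]
    using q a0 by (simp add: power_inverse field_simps)
  have "useq A a0 q g (Suc n) - useq A a0 q f (Suc n)
      = q *\<^sub>R (useq A a0 q g n - useq A a0 q f n) + (1 - q) *\<^sub>R x"
    by (simp add: x_def algebra_simps matrix_vector_mult_diff_distrib)
  then have "norm (useq A a0 q g (Suc n) - useq A a0 q f (Suc n))
      \<le> q * norm (useq A a0 q g n - useq A a0 q f n) + (1 - q) * norm x"
    using q by (simp add: norm_convex_combination)
  also have "\<dots> \<le> q * norm (useq A a0 q g n - useq A a0 q f n)
      + (1 - q) * (norm (g - f) / sqrt a0 / 2 * inverse (sqrt q) ^ Suc n)"
    using x q by (intro add_left_mono mult_left_mono) auto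
  finally show "norm (useq A a0 q g (Suc n) - useq A a0 q f (Suc n))
      \<le> q * norm (useq A a0 q g n - useq A a0 q f n)
        + (1 - q) * (norm (g - f) / sqrt a0 / 2 * inverse (sqrt q) ^ Suc n)" .
qed (use q a0 in auto)

lemma Gseq_estimate:
  fixes A :: "real^'m^'m"
  assumes q: "0 < q" "q < 1" and a0: "0 < a0"
  shows "Gseq A a0 q g n \<le> norm (g - A *v y) + sqrt a0 * norm y * sqrt q ^ n"
proof -
  let ?d = "norm (g - A *v y)"
  have "Gseq A a0 q g n - ?d \<le> sqrt a0 * norm y * sqrt q ^ n"
  proof (rule geometric_recursion[where x = "\<lambda>n. Gseq A a0 q g n - ?d" and c = "sqrt a0 * norm y / 2"])
    show "(1 - q) * (sqrt a0 * norm y / 2) * sqrt q \<le> sqrt a0 * norm y * (sqrt q - q)"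
      using q a0 by (intro sqrt_rate) auto
    have "Gseq A a0 q g 0 - ?d \<le> 0" "0 \<le> sqrt a0 * norm y"
      using a0 by simp_all
    then show "Gseq A a0 q g 0 - ?d \<le> sqrt a0 * norm y"
      by linarith
    fix n
    define a where "a = a0 * q ^ Suc n"
    have a: "0 < a" using q a0 by (simp add: a_def)
    have "Qinv A a *v g = Qinv A a *v (g - A *v y) + Qinv A a *v (A *v y)"
      by (simp add: matrix_vector_mult_diff_distrib)
    then have "a * norm (Qinv A a *v g)
        \<le> a * norm (Qinv A a *v (g - A *v y)) + a * norm (Qinv A a *v (A *v y))"
      using a by (metis distrib_left mult_left_mono norm_triangle_ineq less_imp_le)
    also have "\<dots> \<le> ?d + sqrt a * norm y / 2"
      using Qinv_bound[OF a] Qinv_range_bound[OF a] by (intro add_mono)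
    finally have forcing: "a * norm (Qinv A a *v g) - ?d \<le> sqrt a0 * norm y / 2 * sqrt q ^ Suc n"
      unfolding a_def sqrt_regularization_parameter[OF q(1)[THEN less_imp_le] a0[THEN less_imp_le]]
      by (simp add: ac_simps)
    have "Gseq A a0 q g (Suc n) - ?d
        = q * (Gseq A a0 q g n - ?d) + (1 - q) * (a * norm (Qinv A a *v g) - ?d)"
      by (simp add: a_def algebra_simps)
    also have "\<dots> \<le> q * (Gseq A a0 q g n - ?d) + (1 - q) * (sqrt a0 * norm y / 2 * sqrt q ^ Suc n)"
      using forcing q by (intro add_left_mono mult_left_mono) auto
    finally show "Gseq A a0 q g (Suc n) - ?d \<le> q * (Gseq A a0 q g n - ?d)
        + (1 - q) * (sqrt a0 * norm y / 2 * sqrt q ^ Suc n)" .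
  qed (use q a0 in auto)
  then show ?thesis by simp
qed

lemma Gseq_tendsto:
  fixes A :: "real^'m^'m"
  assumes "(g \<longlongrightarrow> f) F"
  shows "((\<lambda>x. Gseq A a0 q (g x) n) \<longlongrightarrow> Gseq A a0 q f n) F"
proof (induction n)
  case 0
  then show ?case by simp
next
  case (Suc n)
  have "((\<lambda>x. Qinv A (a0 * q ^ Suc n) *v g x) \<longlongrightarrow> Qinv A (a0 * q ^ Suc n) *v f) F"
    by (rule bounded_linear.tendsto[OF matrix_vector_mul_bounded_linear assms])
  then show ?case
    using Suc.IH by (simp del: power_Suc) (intro tendsto_intros)
qed

lemma Gseq_pos:
  fixes A :: "real^'m^'m"
  assumes "0 < q" "q < 1" "0 < a0" "f \<noteq> 0"
  shows "0 < Gseq A a0 q f (Suc n)"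
proof -
  have "0 \<le> Gseq A a0 q f n"
    using assms by (induction n) auto
  then have "0 \<le> q * Gseq A a0 q f n"
    using assms by simp
  moreover have "0 < (1 - q) * a0 * q ^ Suc n * norm (Qinv A (a0 * q ^ Suc n) *v f)"
    using assms Qinv_nonzero[of "a0 * q ^ Suc n" f A] by simp
  ultimately show ?thesis
    by simp
qed

lemma le_powr_self:
  fixes \<delta> \<epsilon> :: real
  assumes "0 \<le> \<delta>" "\<delta> \<le> 1" "\<epsilon> \<le> 1"
  shows "\<delta> \<le> \<delta> powr \<epsilon>"
  using powr_mono'[OF assms(3,1,2)] assms(1) by simp

lemma first_crossing:
  fixes S :: "nat \<Rightarrow> real"
  assumes bound: "\<And>n. S n \<le> d + B * r ^ n" and r: "0 < r" "r < 1"
    and below: "d < \<tau>" and above: "\<tau> < S 1"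
  defines "N \<equiv> LEAST n. 1 \<le> n \<and> S n \<le> \<tau>"
  shows "2 \<le> N" "S N \<le> \<tau>" "\<tau> < d + B * r ^ (N - 1)"
proof -
  have "(\<lambda>n. d + B * r ^ n) \<longlonglongrightarrow> d + B * 0"
    using r by (intro tendsto_intros) auto
  then have "eventually (\<lambda>n. d + B * r ^ n < \<tau>) sequentially"
    using below by (intro order_tendstoD(2)) simp_all
  then obtain n0 where n0: "\<And>n. n0 \<le> n \<Longrightarrow> d + B * r ^ n < \<tau>"
    unfolding eventually_sequentially by blast
  have "1 \<le> Suc n0 \<and> S (Suc n0) \<le> \<tau>"
    using n0[of "Suc n0"] bound[of "Suc n0"] by simp
  then have N: "1 \<le> N \<and> S N \<le> \<tau>"
    unfolding N_def by (rule LeastI)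
  have least: "N \<le> k" if "1 \<le> k" "S k \<le> \<tau>" for k
    unfolding N_def using that by (intro Least_le) simp
  show "S N \<le> \<tau>"
    using N by simp
  have N2: "2 \<le> N"
    using N above by (cases "N = 1") auto
  then show "2 \<le> N" .
  have "\<not> S (N - 1) \<le> \<tau>"
  proof
    assume "S (N - 1) \<le> \<tau>"
    then have "N \<le> N - 1"
      using least[of "N - 1"] N2 by simp
    then show False
      using N2 by simp
  qed
  then show "\<tau> < d + B * r ^ (N - 1)"
    using bound[of "N - 1"] by linarith
qed

lemma stopping_index_crossing:
  fixes A :: "real^'m^'m"
  assumes q: "0 < q" "q < 1" and a0: "0 < a0"
    and data: "norm (g - A *v y) \<le> \<delta>" and tau: "\<delta> < \<tau>" "\<tau> < Gseq A a0 q g 1"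
  defines "N \<equiv> LEAST n. 1 \<le> n \<and> Gseq A a0 q g n \<le> \<tau>"
  shows "2 \<le> N" "Gseq A a0 q g N \<le> \<tau>" "\<tau> < \<delta> + sqrt a0 * norm y * sqrt q ^ (N - 1)"
proof -
  have bound: "Gseq A a0 q g n \<le> \<delta> + sqrt a0 * norm y * sqrt q ^ n" for n
    using Gseq_estimate[OF q a0, of A g n y] data by linarith
  have r: "0 < sqrt q" "sqrt q < 1"
    using q by auto
  show "2 \<le> N" "Gseq A a0 q g N \<le> \<tau>" "\<tau> < \<delta> + sqrt a0 * norm y * sqrt q ^ (N - 1)"
    unfolding N_def using first_crossing[OF bound r tau] by simp_all
qed

lemma exact_data_nonzero:
  fixes A :: "real^'m^'m"
  assumes q: "0 < q" "q < 1" and a0: "0 < a0"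
    and data: "norm (g - f) \<le> \<delta>" and tau: "\<delta> < \<tau>" "\<tau> < Gseq A a0 q g 1"
  shows "f \<noteq> 0"
proof
  assume "f = 0"
  then have "Gseq A a0 q g 1 \<le> \<delta>"
    using Gseq_estimate[OF q a0, of A g 1 0] data by simp
  then show False
    using tau by simp
qed

text \<open>Arithmetic core of the noise estimate at the stopping index N = Suc M.\<close>
lemma stopped_noise_arith:
  fixes e \<delta> \<tau> s r B :: real
  assumes "0 < s" "0 < r" "0 \<le> e" "e \<le> \<delta>" "\<delta> < \<tau>" and gap: "\<tau> - \<delta> < s * B * r ^ M"
  shows "e / s * inverse r ^ Suc M \<le> \<delta> * (B / r) / (\<tau> - \<delta>)"
proof -
  have pos: "0 < \<tau> - \<delta>" "0 < s * r ^ M"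
    using assms by auto
  have gap': "\<tau> - \<delta> \<le> B * (s * r ^ M)"
    using gap by (simp add: mult_ac)
  have "e / s * inverse r ^ Suc M = (e / r) / (s * r ^ M)"
    using assms by (simp add: power_inverse field_simps)
  also have "\<dots> \<le> (\<delta> / r) / (s * r ^ M)"
    using assms pos by (intro divide_right_mono) auto
  also have "\<dots> = ((\<delta> / r) * (\<tau> - \<delta>)) / ((\<tau> - \<delta>) * (s * r ^ M))"
    using pos by simp
  also have "\<dots> \<le> ((\<delta> / r) * (B * (s * r ^ M))) / ((\<tau> - \<delta>) * (s * r ^ M))"
    using assms pos gap' by (intro divide_right_mono mult_left_mono) auto
  also have "\<dots> = (\<delta> / r * B) * (s * r ^ M) / ((\<tau> - \<delta>) * (s * r ^ M))"
    by (simp only: mult.assoc)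
  also have "\<dots> = \<delta> / r * B / (\<tau> - \<delta>)"
    using pos(2) by (intro nonzero_mult_divide_mult_cancel_right) linarith
  finally show ?thesis
    by simp
qed

lemma stopped_iterate_error:
  fixes A :: "real^'m^'m"
  assumes q: "0 < q" "q < 1" and a0: "0 < a0" and yz: "y = transpose A *v z" and Ay: "A *v y = f"
    and data: "norm (g - f) \<le> \<delta>" and tau: "\<delta> < \<tau>" "\<tau> < Gseq A a0 q g 1"
  defines "N \<equiv> LEAST n. 1 \<le> n \<and> Gseq A a0 q g n \<le> \<tau>"
  shows "norm (useq A a0 q g N - y)
    \<le> (norm y + sqrt a0 * norm z) * sqrt q ^ N + \<delta> * (norm y / sqrt q) / (\<tau> - \<delta>)"
proof -
  have "norm (g - A *v y) \<le> \<delta>"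
    using data Ay by simp
  then have "2 \<le> N" "\<tau> < \<delta> + sqrt a0 * norm y * sqrt q ^ (N - 1)"
    unfolding N_def using stopping_index_crossing[OF q a0 _ tau] by auto
  then obtain M where M: "N = Suc M" and gap: "\<tau> - \<delta> < sqrt a0 * norm y * sqrt q ^ M"
    by (cases N) auto
  have "norm (useq A a0 q g N - useq A a0 q f N) \<le> norm (g - f) / sqrt a0 * inverse (sqrt q) ^ N"
    by (rule noise_estimate[OF q a0])
  also have "\<dots> \<le> \<delta> * (norm y / sqrt q) / (\<tau> - \<delta>)"
    unfolding M using q a0 data tau gap by (intro stopped_noise_arith) auto
  finally have noise: "norm (useq A a0 q g N - useq A a0 q f N) \<le> \<delta> * (norm y / sqrt q) / (\<tau> - \<delta>)" .
  have bias: "norm (useq A a0 q f N - y) \<le> (norm y + sqrt a0 * norm z) * sqrt q ^ N"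
    using bias_estimate[OF q a0 yz, of N] Ay by simp
  show ?thesis
    using norm_triangle_ineq[of "useq A a0 q g N - useq A a0 q f N" "useq A a0 q f N - y"] noise bias
    by simp
qed

lemma noise_weight_bound:
  fixes \<delta> \<epsilon> C b :: real
  assumes "0 < \<delta>" "\<delta> < 1" "\<epsilon> < 1" "1 < C" "0 \<le> b"
  shows "\<delta> * b / (C * \<delta> powr \<epsilon> - \<delta>) \<le> b / (C - 1) * \<delta> powr (1 - \<epsilon>)"
proof -
  have "\<delta> \<le> \<delta> powr \<epsilon>"
    using assms by (intro le_powr_self) auto
  then have le: "(C - 1) * \<delta> powr \<epsilon> \<le> C * \<delta> powr \<epsilon> - \<delta>"
    by (simp add: algebra_simps)
  have pos: "0 < (C - 1) * \<delta> powr \<epsilon>"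
    using assms by simp
  then have pos': "0 < C * \<delta> powr \<epsilon> - \<delta>"
    using le by linarith
  have "\<delta> * b / (C * \<delta> powr \<epsilon> - \<delta>) \<le> \<delta> * b / ((C - 1) * \<delta> powr \<epsilon>)"
    using le pos pos' assms by (intro divide_left_mono mult_pos_pos) auto
  also have "\<dots> = b / (C - 1) * (\<delta> / \<delta> powr \<epsilon>)"
    by simp
  also have "\<delta> / \<delta> powr \<epsilon> = \<delta> powr (1 - \<epsilon>)"
    using assms by (simp add: powr_diff)
  finally show ?thesis .
qed

lemma tendsto_at_right_0_of_dist_le:
  fixes g :: "real \<Rightarrow> 'a::real_normed_vector"
  assumes "\<And>\<delta>. 0 < \<delta> \<Longrightarrow> \<delta> < 1 \<Longrightarrow> norm (g \<delta> - l) \<le> \<delta>"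
  shows "(g \<longlongrightarrow> l) (at_right 0)"
proof -
  have "eventually (\<lambda>\<delta>. norm (g \<delta> - l) \<le> \<delta>) (at_right 0)"
    unfolding eventually_at_right_field using assms by (intro exI[of _ 1]) auto
  then have "((\<lambda>\<delta>. g \<delta> - l) \<longlongrightarrow> 0) (at_right 0)"
    by (rule Lim_null_comparison) (rule tendsto_ident_at)
  then show ?thesis
    by (simp add: LIM_zero_iff)
qed

lemma index_tendsto_top:
  fixes S :: "'a \<Rightarrow> nat \<Rightarrow> real" and N :: "'a \<Rightarrow> nat"
  assumes lim: "\<And>k. 1 \<le> k \<Longrightarrow> ((\<lambda>x. S x k) \<longlongrightarrow> L k) F"
    and pos: "\<And>k. 1 \<le> k \<Longrightarrow> 0 < L k"
    and tau: "(\<tau> \<longlongrightarrow> 0) F"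
    and stop: "eventually (\<lambda>x. 1 \<le> N x \<and> S x (N x) \<le> \<tau> x) F"
  shows "filterlim N at_top F"
  unfolding filterlim_at_top
proof
  fix Z
  have "\<forall>k\<in>{1..Z}. eventually (\<lambda>x. \<tau> x < S x k) F"
  proof
    fix k assume k: "k \<in> {1..Z}"
    have "((\<lambda>x. S x k - \<tau> x) \<longlongrightarrow> L k - 0) F"
      using k lim tau by (intro tendsto_diff) auto
    moreover have "0 < L k - 0"
      using k pos by auto
    ultimately have "eventually (\<lambda>x. 0 < S x k - \<tau> x) F"
      by (rule order_tendstoD(1))
    then show "eventually (\<lambda>x. \<tau> x < S x k) F"
      by (rule eventually_mono) simp
  qed
  then have "eventually (\<lambda>x. \<forall>k\<in>{1..Z}. \<tau> x < S x k) F"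
    by (rule eventually_ball_finite[rotated]) simp
  with stop show "eventually (\<lambda>x. Z \<le> N x) F"
  proof eventually_elim
    case (elim x)
    then have "N x \<notin> {1..Z}"
      by force
    then show "Z \<le> N x"
      using elim by auto
  qed
qed

text \<open>Small noise levels lie in the interval (0,1) where the hypotheses on f_delta apply.\<close>
lemma eventually_at_right_0_below_1: "\<forall>\<^sub>F \<delta> in at_right 0. 0 < \<delta> \<and> \<delta> < (1::real)"
  unfolding eventually_at_right_field by (intro exI[of _ 1]) auto

lemma tendsto_powr_at_right_0:
  fixes p :: real
  assumes "0 < p"
  shows "((\<lambda>\<delta>. \<delta> powr p) \<longlongrightarrow> 0) (at_right 0)"
  using eventually_at_right_0_below_1 assms
  by (intro tendsto_zero_powrI[OF tendsto_ident_at tendsto_const]) (auto elim: eventually_mono)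

lemma noise_below_threshold:
  fixes \<delta> \<epsilon> C :: real
  assumes "0 < \<delta>" "\<delta> < 1" "\<epsilon> \<le> 1" "1 < C"
  shows "\<delta> < C * \<delta> powr \<epsilon>"
proof -
  have "\<delta> \<le> \<delta> powr \<epsilon>" "\<delta> powr \<epsilon> < C * \<delta> powr \<epsilon>"
    using assms by (auto intro: le_powr_self)
  then show ?thesis
    by linarith
qed

lemma stopped_error_eventually:
  fixes A :: "real^'m^'m" and fd :: "real \<Rightarrow> real^'m"
  assumes q: "0 < q" "q < 1" and a0: "0 < a0" and C: "1 < C" and eps: "\<epsilon> < 1"
    and yz: "y = transpose A *v z" and Ay: "A *v y = f"
    and data: "\<And>\<delta>. 0 < \<delta> \<Longrightarrow> \<delta> < 1 \<Longrightarrow> norm (fd \<delta> - f) \<le> \<delta>"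
    and start: "\<And>\<delta>. 0 < \<delta> \<Longrightarrow> \<delta> < 1 \<Longrightarrow> C * \<delta> powr \<epsilon> < Gseq A a0 q (fd \<delta>) 1"
  shows "\<forall>\<^sub>F \<delta> in at_right 0.
           norm (useq A a0 q (fd \<delta>) (stop_index A a0 q (fd \<delta>) C \<epsilon> \<delta>) - y)
             \<le> (norm y + sqrt a0 * norm z) * sqrt q ^ stop_index A a0 q (fd \<delta>) C \<epsilon> \<delta>
               + norm y / sqrt q / (C - 1) * \<delta> powr (1 - \<epsilon>)"
  using eventually_at_right_0_below_1
proof eventually_elim
  case (elim \<delta>)
  then have d: "0 < \<delta>" "\<delta> < 1"
    by auto
  then have "\<delta> < C * \<delta> powr \<epsilon>"
    using C eps by (intro noise_below_threshold) auto
  then have "norm (useq A a0 q (fd \<delta>) (stop_index A a0 q (fd \<delta>) C \<epsilon> \<delta>) - y)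
      \<le> (norm y + sqrt a0 * norm z) * sqrt q ^ stop_index A a0 q (fd \<delta>) C \<epsilon> \<delta>
        + \<delta> * (norm y / sqrt q) / (C * \<delta> powr \<epsilon> - \<delta>)"
    unfolding stop_index_def by (rule stopped_iterate_error[OF q a0 yz Ay data[OF d] _ start[OF d]])
  moreover have "\<delta> * (norm y / sqrt q) / (C * \<delta> powr \<epsilon> - \<delta>) \<le> norm y / sqrt q / (C - 1) * \<delta> powr (1 - \<epsilon>)"
    using elim eps C q by (intro noise_weight_bound) auto
  ultimately show ?case
    by linarith
qed

lemma stop_index_tendsto_top:
  fixes A :: "real^'m^'m" and fd :: "real \<Rightarrow> real^'m"
  assumes q: "0 < q" "q < 1" and a0: "0 < a0" and C: "1 < C" and eps: "0 < \<epsilon>" "\<epsilon> < 1"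
    and Ay: "A *v y = f"
    and data: "\<And>\<delta>. 0 < \<delta> \<Longrightarrow> \<delta> < 1 \<Longrightarrow> norm (fd \<delta> - f) \<le> \<delta>"
    and start: "\<And>\<delta>. 0 < \<delta> \<Longrightarrow> \<delta> < 1 \<Longrightarrow> C * \<delta> powr \<epsilon> < Gseq A a0 q (fd \<delta>) 1"
  shows "filterlim (\<lambda>\<delta>. stop_index A a0 q (fd \<delta>) C \<epsilon> \<delta>) at_top (at_right 0)"
proof (rule index_tendsto_top[where S = "\<lambda>\<delta> k. Gseq A a0 q (fd \<delta>) k" and L = "Gseq A a0 q f"
      and \<tau> = "\<lambda>\<delta>. C * \<delta> powr \<epsilon>"])
  have below: "\<delta> < C * \<delta> powr \<epsilon>" if "0 < \<delta>" "\<delta> < 1" for \<delta>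
    using that C eps by (intro noise_below_threshold) auto
  have "(fd \<longlongrightarrow> f) (at_right 0)"
    using data by (rule tendsto_at_right_0_of_dist_le)
  then show "((\<lambda>\<delta>. Gseq A a0 q (fd \<delta>) k) \<longlongrightarrow> Gseq A a0 q f k) (at_right 0)" for k
    by (rule Gseq_tendsto)
  have "f \<noteq> 0"
    using data[of "1/2"] below[of "1/2"] start[of "1/2"] by (intro exact_data_nonzero[OF q a0]) auto
  then show "0 < Gseq A a0 q f k" if "1 \<le> k" for k
    using Gseq_pos[OF q a0, of f A "k - 1"] that by simp
  show "((\<lambda>\<delta>. C * \<delta> powr \<epsilon>) \<longlongrightarrow> 0) (at_right 0)"
    using tendsto_powr_at_right_0[OF eps(1)] by (rule tendsto_mult_right_zero)
  show "\<forall>\<^sub>F \<delta> in at_right 0. 1 \<le> stop_index A a0 q (fd \<delta>) C \<epsilon> \<delta>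
      \<and> Gseq A a0 q (fd \<delta>) (stop_index A a0 q (fd \<delta>) C \<epsilon> \<delta>) \<le> C * \<delta> powr \<epsilon>"
    using eventually_at_right_0_below_1
  proof eventually_elim
    case (elim \<delta>)
    then have d: "0 < \<delta>" "\<delta> < 1"
      by auto
    then have "norm (fd \<delta> - A *v y) \<le> \<delta>"
      using data Ay by auto
    from stopping_index_crossing[OF q a0 this below[OF d] start[OF d]] show ?case
      unfolding stop_index_def by simp
  qed
qed

theorem theorem2p10:
  fixes A :: "real^'m^'m" and f y :: "real^'m" and fd :: "real \<Rightarrow> real^'m"
    and q a0 C \<epsilon> :: real
  assumes "f \<in> range (\<lambda>x. A *v x)"
    and "min_norm_solution A f y"
    and "0 < q" "q < 1" "0 < a0" "1 < C" "0 < \<epsilon>" "\<epsilon> < 1"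
    and "\<And>\<delta>. 0 < \<delta> \<Longrightarrow> \<delta> < 1 \<Longrightarrow> norm (fd \<delta> - f) \<le> \<delta>"
    and "\<And>\<delta>. 0 < \<delta> \<Longrightarrow> \<delta> < 1 \<Longrightarrow>
           (1 - q) * a0 * q * norm (Qinv A (a0 * q) *v fd \<delta>) > C * \<delta> powr \<epsilon>"
  shows "((\<lambda>\<delta>. norm (useq A a0 q (fd \<delta>) (stop_index A a0 q (fd \<delta>) C \<epsilon> \<delta>) - y))
           \<longlongrightarrow> 0) (at_right 0)"
proof -
  note q = assms(3,4) and a0 = assms(5) and C = assms(6) and eps = assms(7,8) and data = assms(9)
  obtain z where yz: "y = transpose A *v z"
    using min_norm_solution_in_range_transpose[OF assms(2)] by blast
  have Ay: "A *v y = f"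
    using assms(2) by (simp add: min_norm_solution_def)
  have start: "C * \<delta> powr \<epsilon> < Gseq A a0 q (fd \<delta>) 1" if "0 < \<delta>" "\<delta> < 1" for \<delta>
    using assms(10)[OF that] by simp
  let ?N = "\<lambda>\<delta>. stop_index A a0 q (fd \<delta>) C \<epsilon> \<delta>"
  have "filterlim ?N at_top (at_right 0)"
    using stop_index_tendsto_top[OF q a0 C eps Ay data start] .
  then have "((\<lambda>\<delta>. sqrt q ^ ?N \<delta>) \<longlongrightarrow> 0) (at_right 0)"
    using filterlim_compose[OF LIMSEQ_power_zero[of "sqrt q"]] q by simp
  then have "((\<lambda>\<delta>. (norm y + sqrt a0 * norm z) * sqrt q ^ ?N \<delta>
      + norm y / sqrt q / (C - 1) * \<delta> powr (1 - \<epsilon>)) \<longlongrightarrow> 0) (at_right 0)"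
    using tendsto_powr_at_right_0[of "1 - \<epsilon>"] eps
    by (intro tendsto_add_zero tendsto_mult_right_zero) auto
  with stopped_error_eventually[OF q a0 C eps(2) yz Ay data start]
  have "((\<lambda>\<delta>. useq A a0 q (fd \<delta>) (?N \<delta>) - y) \<longlongrightarrow> 0) (at_right 0)"
    by (rule Lim_null_comparison)
  then show ?thesis
    by (simp add: tendsto_norm_zero_iff)
qed

end
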